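(* Let $S$ be a quasi-thin scheme on $X$ and $\mathbb F$ a field. Then $S$ is triply regular if and only if there do not exist $R_u,R_v,R_w,R_y,R_z\in S$ with $k_u=k_v=k_w=k_y=k_z=2$ and $p_{uv}^w=p_{wy}^z=|R_{u'}R_z|=1$.
   Context: Let $X$ be a nonempty finite set. A scheme of class $d$ on $X$ is a partition $S=\{R_0,\dots,R_d\}$ of $X\times X$ into nonempty sets such that $R_0=\{(b,b):b\in X\}$; for each $c$ there is $c'$ with $R_{c'}=\{(f,e):(e,f)\in R_c\}$; and for all $i,j,k$ the intersection number $p_{ij}^k=|\{\ell\in X:(m,\ell)\in R_i,(\ell,n)\in R_j\}|$ does not depend on $(m,n)\in R_k$. The valency is $k_a=p_{aa'}^0$; quasi-thin means all $k_a\le 2$; complex product $R_aR_b=\{R_c:p_{ab}^c>0\}$. For $y\in X$, $yR_a=\{z:(y,z)\in R_a\}$; $A_a\in M_X(\mathbb F)$ is the $(0,1)$ adjacency matrix of $R_a$ and $E_a^*(y)$ is the diagonal $(0,1)$-matrix with ones exactly at positions indexed by $yR_a$. $S$ is triply regular if for every $y\in X$ the $\mathbb F$-linear span of all products $E_i^*(y)A_jE_\ell^*(y)$ ($R_i,R_j,R_\ell\in S$) is a unital $\mathbb F$-subalgebra of $M_X(\mathbb F)$. *)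

theory Defs
  imports Main
begin

text \<open>The ground set X is a finite type 'x (types are nonempty). A scheme is a set S
of relations on 'x partitioning UNIV \<times> UNIV.\<close>

definition is_scheme :: "('x::finite \<times> 'x) set set \<Rightarrow> bool" where
  "is_scheme S \<longleftrightarrow>
     (\<forall>R\<in>S. R \<noteq> {}) \<and> \<Union>S = UNIV \<and>
     (\<forall>R\<in>S. \<forall>Q\<in>S. R \<noteq> Q \<longrightarrow> R \<inter> Q = {}) \<and>
     Id \<in> S \<and>
     (\<forall>R\<in>S. converse R \<in> S) \<and>
     (\<forall>i\<in>S. \<forall>j\<in>S. \<forall>k\<in>S. \<forall>m n m' n'. (m,n) \<in> k \<longrightarrow> (m',n') \<in> k \<longrightarrow>
        card {l. (m,l) \<in> i \<and> (l,n) \<in> j} = card {l. (m',l) \<in> i \<and> (l,n') \<in> j})"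

text \<open>Intersection number p_{ij}^k (well defined for relations of a scheme).\<close>
definition inum :: "('x::finite \<times> 'x) set \<Rightarrow> ('x \<times> 'x) set \<Rightarrow> ('x \<times> 'x) set \<Rightarrow> nat" where
  "inum i j k = (SOME c. \<forall>m n. (m,n) \<in> k \<longrightarrow> card {l. (m,l) \<in> i \<and> (l,n) \<in> j} = c)"

definition valency :: "('x::finite \<times> 'x) set \<Rightarrow> nat" where
  "valency a = inum a (converse a) Id"

definition quasi_thin :: "('x::finite \<times> 'x) set set \<Rightarrow> bool" where
  "quasi_thin S \<longleftrightarrow> (\<forall>a\<in>S. valency a \<le> 2)"

definition cprod :: "('x::finite \<times> 'x) set set \<Rightarrow> ('x \<times> 'x) set \<Rightarrow> ('x \<times> 'x) set \<Rightarrow> ('x \<times> 'x) set set" where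
  "cprod S a b = {c \<in> S. inum a b c > 0}"

type_synonym ('x, 'f) mat = "'x \<Rightarrow> 'x \<Rightarrow> 'f"

definition adj :: "('x \<times> 'x) set \<Rightarrow> ('x, 'f::field) mat" where
  "adj R = (\<lambda>a b. if (a,b) \<in> R then 1 else 0)"

definition dual_idem :: "'x \<Rightarrow> ('x \<times> 'x) set \<Rightarrow> ('x, 'f::field) mat" where
  "dual_idem y R = (\<lambda>a b. if a = b \<and> (y,a) \<in> R then 1 else 0)"

definition mmult :: "('x::finite, 'f::field) mat \<Rightarrow> ('x, 'f) mat \<Rightarrow> ('x, 'f) mat" where
  "mmult A B = (\<lambda>a c. \<Sum>b\<in>UNIV. A a b * B b c)"

definition mone :: "('x, 'f::field) mat" where
  "mone = (\<lambda>a b. if a = b then 1 else 0)"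

definition mspan :: "('x, 'f::field) mat set \<Rightarrow> ('x, 'f) mat set" where
  "mspan G = {M. \<exists>c F. finite F \<and> F \<subseteq> G \<and> M = (\<lambda>a b. \<Sum>g\<in>F. c g * g a b)}"

definition unital_subalgebra :: "('x::finite, 'f::field) mat set \<Rightarrow> bool" where
  "unital_subalgebra A \<longleftrightarrow>
     (\<forall>M\<in>A. \<forall>N\<in>A. (\<lambda>a b. M a b + N a b) \<in> A) \<and>
     (\<forall>c. \<forall>M\<in>A. (\<lambda>a b. c * M a b) \<in> A) \<and>
     (\<lambda>a b. 0) \<in> A \<and>
     mone \<in> A \<and>
     (\<forall>M\<in>A. \<forall>N\<in>A. mmult M N \<in> A)"

definition triply_regular :: "'f::field itself \<Rightarrow> ('x::finite \<times> 'x) set set \<Rightarrow> bool" where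
  "triply_regular _ S \<longleftrightarrow>
     (\<forall>y. unital_subalgebra
        (mspan {mmult (mmult (dual_idem y i) (adj j)) (dual_idem y l) :: ('x,'f) mat
                | i j l. i \<in> S \<and> j \<in> S \<and> l \<in> S}))"

end

theory Submission
  imports Defs
begin

(* For a base point p, the generator E_i*(p) A_j E_l*(p) is the 0/1 indicator of the pairs (a,b)
   whose triangle (p,a,b) has type (r(p,a), r(a,b), r(p,b)) = (i,j,l), so the generators span the
   matrices constant on triangle types. This space is closed under multiplication iff every
   triple intersection number |{x. (p,x) in R_l, (a,x) in R_j, (x,b) in R_m}|, read in F, depends
   only on the type of (p,a,b).
   In a quasi-thin scheme the triple count is the size of an intersection of two of the three
   sets counted by the face intersection numbers p_{lj'}^i, p_{lm}^n, p_{jm}^k, which lie in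
   neighbourhoods of size at most 2; hence it is determined by the type unless all three numbers
   are 1. If then one triangle of the type has such a point and another has none, the witnesses
   for the second one force all valencies to be 2, p_{ij}^l = p_{lm}^n = 1 and p_{ik}^n = k_i,
   which is the forbidden configuration. Conversely the configuration yields two triangles of the
   same type with triple counts 1 and 0, which differ in every field. *)

lemma sum_card_filter_swap:
  assumes "finite A" "finite B"
  shows "(\<Sum>x\<in>A. card {y\<in>B. E x y}) = (\<Sum>y\<in>B. card {x\<in>A. E x y})"
proof -
  have "(\<Sum>x\<in>A. card {y\<in>B. E x y}) = (\<Sum>x\<in>A. \<Sum>y\<in>B. of_bool (E x y))"
    using assms(2) by (simp add: Int_def)
  also have "\<dots> = (\<Sum>y\<in>B. \<Sum>x\<in>A. of_bool (E x y))"
    by (rule sum.swap)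
  also have "\<dots> = (\<Sum>y\<in>B. card {x\<in>A. E x y})"
    using assms(1) by (simp add: Int_def)
  finally show ?thesis .
qed

lemma two_le_card: "finite A \<Longrightarrow> u \<in> A \<Longrightarrow> v \<in> A \<Longrightarrow> u \<noteq> v \<Longrightarrow> 2 \<le> card A"
  using card_le_Suc0_iff_eq[of A] by fastforce

lemma card_Int_eq_if_card_ne_1:
  assumes "finite P" "finite P'" "card P \<le> 2" "card P' \<le> 2"
    and "A \<subseteq> P" "B \<subseteq> P" "A' \<subseteq> P'" "B' \<subseteq> P'"
    and "card A = card A'" "card B = card B'" "card A \<noteq> 1"
  shows "card (A \<inter> B) = card (A' \<inter> B')"
proof -
  have fin: "finite A" "finite A'" "finite B" "finite B'"
    using assms(1,2,5-8) finite_subset by metis+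
  have "card A \<le> 2" using card_mono[OF assms(1,5)] assms(3) by linarith
  with assms(11) consider "card A = 0" | "card A = 2" by linarith
  then show ?thesis
  proof cases
    case 1
    then show ?thesis using assms(9) fin by simp
  next
    case 2
    have "card P = 2" "card P' = 2"
      using 2 assms(3,4,9) card_mono[OF assms(1,5)] card_mono[OF assms(2,7)] by linarith+
    then have "A = P" "A' = P'"
      using 2 assms(1,2,5,7,9) card_subset_eq by metis+
    then show ?thesis using assms(6,8,10) by (simp add: Int_absorb1)
  qed
qed

definition fiber_constant :: "('x \<Rightarrow> 'x \<Rightarrow> 't) \<Rightarrow> ('x, 'f::field) mat set" where
  "fiber_constant f = {M. \<forall>a b a' b'. f a b = f a' b' \<longrightarrow> M a b = M a' b'}"

definition fiber_indicator :: "('x \<Rightarrow> 'x \<Rightarrow> 't) \<Rightarrow> 't \<Rightarrow> ('x, 'f::field) mat" where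
  "fiber_indicator f t = (\<lambda>a b. of_bool (f a b = t))"

lemma fiber_constantD: "M \<in> fiber_constant f \<Longrightarrow> f a b = f a' b' \<Longrightarrow> M a b = M a' b'"
  unfolding fiber_constant_def by blast

lemma fiber_indicator_in_fiber_constant: "fiber_indicator f t \<in> fiber_constant f"
  unfolding fiber_indicator_def fiber_constant_def by simp

lemma fiber_constant_linear:
  assumes "M \<in> fiber_constant f" "N \<in> fiber_constant f"
  shows "(\<lambda>a b. M a b + N a b) \<in> fiber_constant f" "(\<lambda>a b. c * M a b) \<in> fiber_constant f"
  using assms unfolding fiber_constant_def mem_Collect_eq by metis+

lemma zero_in_fiber_constant: "(\<lambda>a b. 0) \<in> fiber_constant f"
  unfolding fiber_constant_def by simp

lemma fiber_constant_iff_factors: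
  "M \<in> fiber_constant f \<longleftrightarrow> (\<exists>\<phi>. M = (\<lambda>a b. \<phi> (f a b)))"
proof
  assume M: "M \<in> fiber_constant f"
  define pick where "pick t = (SOME ab. f (fst ab) (snd ab) = t)" for t
  have "f (fst (pick (f a b))) (snd (pick (f a b))) = f a b" for a b
    unfolding pick_def by (rule someI_ex) (rule exI[of _ "(a,b)"], simp)
  then show "\<exists>\<phi>. M = (\<lambda>a b. \<phi> (f a b))"
    using fiber_constantD[OF M] by (intro exI[where x="\<lambda>t. M (fst (pick t)) (snd (pick t))"] ext) metis
next
  assume "\<exists>\<phi>. M = (\<lambda>a b. \<phi> (f a b))"
  then show "M \<in> fiber_constant f" unfolding fiber_constant_def by auto
qed

lemma mspan_fiber_indicators_subset:
  "mspan {fiber_indicator f t | t. t \<in> T} \<subseteq> (fiber_constant f :: ('x, 'f::field) mat set)"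
proof
  fix M :: "('x, 'f) mat"
  assume "M \<in> mspan {fiber_indicator f t | t. t \<in> T}"
  then obtain c F where F: "F \<subseteq> {fiber_indicator f t | t. t \<in> T}" "M = (\<lambda>a b. \<Sum>g\<in>F. c g * g a b)"
    unfolding mspan_def by blast
  show "M \<in> fiber_constant f"
    unfolding fiber_constant_def
  proof (intro CollectI allI impI)
    fix a b a' b' assume "f a b = f a' b'"
    then have "g a b = g a' b'" if "g \<in> F" for g
      using that F(1) unfolding fiber_indicator_def by auto
    then show "M a b = M a' b'" unfolding F(2) by (intro sum.cong refl) simp
  qed
qed

lemma fiber_constant_subset_mspan:
  assumes "finite T" "\<And>a b. f a b \<in> T"
  shows "(fiber_constant f :: ('x, 'f::field) mat set) \<subseteq> mspan {fiber_indicator f t | t. t \<in> T}"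
proof
  define G :: "('x, 'f) mat set" where "G = {fiber_indicator f t | t. t \<in> T}"
  have "finite G"
    unfolding G_def using assms(1) by simp
  fix M :: "('x, 'f) mat"
  assume M: "M \<in> fiber_constant f"
  define pick where "pick g = (SOME ab. g (fst ab) (snd ab) = (1::'f))" for g :: "('x, 'f) mat"
  define c where "c g = M (fst (pick g)) (snd (pick g))" for g
  have "M a b = (\<Sum>g\<in>G. c g * g a b)" for a b
  proof -
    define g0 where "g0 = (fiber_indicator f (f a b) :: ('x, 'f) mat)"
    have g0: "g0 \<in> G" "g0 a b = 1"
      unfolding g0_def G_def fiber_indicator_def using assms(2) by auto
    have "c g * g a b = 0" if "g \<in> G - {g0}" for g
      using that unfolding G_def g0_def fiber_indicator_def by auto
    then have "(\<Sum>g\<in>G - {g0}. c g * g a b) = 0"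
      by (intro sum.neutral) blast
    then have sum_eq: "(\<Sum>g\<in>G. c g * g a b) = c g0"
      using sum.remove[OF \<open>finite G\<close> g0(1), of "\<lambda>g. c g * g a b"] g0(2) by simp
    have "g0 (fst (pick g0)) (snd (pick g0)) = 1"
      unfolding pick_def by (rule someI_ex) (rule exI[of _ "(a,b)"], simp add: g0(2))
    then have "f (fst (pick g0)) (snd (pick g0)) = f a b"
      unfolding g0_def fiber_indicator_def by (simp add: of_bool_def split: if_splits)
    then have "c g0 = M a b"
      unfolding c_def by (rule fiber_constantD[OF M])
    then show ?thesis using sum_eq by simp
  qed
  then have "M = (\<lambda>a b. \<Sum>g\<in>G. c g * g a b)" by (intro ext)
  then show "M \<in> mspan G"
    unfolding mspan_def using \<open>finite G\<close> by (intro CollectI exI[of _ c] exI[of _ G]) simp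
qed

lemma mspan_fiber_indicators:
  assumes "finite T" "\<And>a b. f a b \<in> T"
  shows "mspan {fiber_indicator f t | t. t \<in> T} = (fiber_constant f :: ('x, 'f::field) mat set)"
  using mspan_fiber_indicators_subset fiber_constant_subset_mspan[OF assms] by (rule subset_antisym)

lemma mmult_dual_idem_left: "mmult (dual_idem p i) M = (\<lambda>a b. of_bool ((p,a) \<in> i) * M a b)"
proof (intro ext)
  fix a b
  have "mmult (dual_idem p i) M a b = (\<Sum>c\<in>UNIV. if c = a then of_bool ((p,a) \<in> i) * M a b else 0)"
    unfolding mmult_def dual_idem_def by (rule sum.cong) auto
  then show "mmult (dual_idem p i) M a b = of_bool ((p,a) \<in> i) * M a b" by simp
qed

lemma mmult_dual_idem_right: "mmult M (dual_idem p l) = (\<lambda>a b. M a b * of_bool ((p,b) \<in> l))"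
proof (intro ext)
  fix a b
  have "mmult M (dual_idem p l) a b = (\<Sum>c\<in>UNIV. if c = b then M a b * of_bool ((p,b) \<in> l) else 0)"
    unfolding mmult_def dual_idem_def by (rule sum.cong) auto
  then show "mmult M (dual_idem p l) a b = M a b * of_bool ((p,b) \<in> l)" by simp
qed

lemma dual_idem_adj_dual_idem:
  "mmult (mmult (dual_idem p i) (adj j)) (dual_idem p l) =
    (\<lambda>a b. of_bool ((p,a) \<in> i \<and> (a,b) \<in> j \<and> (p,b) \<in> l) :: 'f::field)"
  unfolding mmult_dual_idem_left mmult_dual_idem_right adj_def by (simp add: fun_eq_iff)

definition triple_count :: "'x \<Rightarrow> ('x \<times> 'x) set \<Rightarrow> ('x \<times> 'x) set \<Rightarrow> ('x \<times> 'x) set \<Rightarrow> 'x \<Rightarrow> 'x \<Rightarrow> nat" where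
  "triple_count p l j m a b = card {x. (p,x) \<in> l \<and> (a,x) \<in> j \<and> (x,b) \<in> m}"

definition forbidden_configuration :: "('x::finite \<times> 'x) set set \<Rightarrow> ('x \<times> 'x) set \<Rightarrow> ('x \<times> 'x) set \<Rightarrow>
    ('x \<times> 'x) set \<Rightarrow> ('x \<times> 'x) set \<Rightarrow> ('x \<times> 'x) set \<Rightarrow> bool" where
  "forbidden_configuration S u v w y z \<longleftrightarrow>
     valency u = 2 \<and> valency v = 2 \<and> valency w = 2 \<and> valency y = 2 \<and> valency z = 2 \<and>
     inum u v w = 1 \<and> inum w y z = 1 \<and> card (cprod S (converse u) z) = 1"

locale scheme =
  fixes S :: "('x::finite \<times> 'x) set set"
  assumes is_scheme: "is_scheme S"
begin

lemma finite_scheme: "finite S"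
  by (rule finite_subset[of S "Pow UNIV"]) simp_all

lemma nonempty_rel: "r \<in> S \<Longrightarrow> r \<noteq> {}"
  using is_scheme[unfolded is_scheme_def, THEN conjunct1] by blast

lemma Id_in_scheme: "Id \<in> S"
  using is_scheme[unfolded is_scheme_def, THEN conjunct2, THEN conjunct2, THEN conjunct2, THEN conjunct1] .

lemma converse_in_scheme: "r \<in> S \<Longrightarrow> converse r \<in> S"
  using is_scheme[unfolded is_scheme_def, THEN conjunct2, THEN conjunct2, THEN conjunct2,
      THEN conjunct2, THEN conjunct1] by blast

lemma regularity:
  "\<lbrakk>i \<in> S; j \<in> S; k \<in> S; (m,n) \<in> k; (m',n') \<in> k\<rbrakk> \<Longrightarrow>
    card {l. (m,l) \<in> i \<and> (l,n) \<in> j} = card {l. (m',l) \<in> i \<and> (l,n') \<in> j}"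
  using is_scheme[unfolded is_scheme_def, THEN conjunct2, THEN conjunct2, THEN conjunct2,
      THEN conjunct2, THEN conjunct2] by blast

lemma inum_eq_card:
  assumes "i \<in> S" "j \<in> S" "k \<in> S" "(m,n) \<in> k"
  shows "inum i j k = card {l. (m,l) \<in> i \<and> (l,n) \<in> j}"
  unfolding inum_def
proof (rule some_equality)
  show "\<forall>m' n'. (m',n') \<in> k \<longrightarrow>
      card {l. (m',l) \<in> i \<and> (l,n') \<in> j} = card {l. (m,l) \<in> i \<and> (l,n) \<in> j}"
    using regularity assms by blast
next
  fix c assume "\<forall>m' n'. (m',n') \<in> k \<longrightarrow> card {l. (m',l) \<in> i \<and> (l,n') \<in> j} = c"
  then show "c = card {l. (m,l) \<in> i \<and> (l,n) \<in> j}" using assms(4) by simp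
qed

lemma valency_eq_card: "a \<in> S \<Longrightarrow> valency a = card {x. (p,x) \<in> a}"
  unfolding valency_def
  using inum_eq_card[OF _ converse_in_scheme Id_in_scheme, of a a p p] by simp

lemma card_rel: "a \<in> S \<Longrightarrow> card a = card (UNIV :: 'x set) * valency a"
proof -
  assume a: "a \<in> S"
  have "card a = card (SIGMA p:UNIV. {x. (p,x) \<in> a})"
    by (rule arg_cong[where f=card]) auto
  also have "\<dots> = (\<Sum>p\<in>UNIV. card {x. (p,x) \<in> a})"
    by (rule card_SigmaI) simp_all
  also have "\<dots> = card (UNIV :: 'x set) * valency a"
    using valency_eq_card[OF a] by simp
  finally show ?thesis .
qed

lemma valency_converse: "a \<in> S \<Longrightarrow> valency (converse a) = valency a"
proof -
  assume a: "a \<in> S"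
  have "card (UNIV :: 'x set) * valency (converse a) = card (UNIV :: 'x set) * valency a"
    using card_rel[OF a] card_rel[OF converse_in_scheme[OF a]] card_inverse[of a] by simp
  moreover have "card (UNIV :: 'x set) \<noteq> 0" by simp
  ultimately show ?thesis by (rule mult_left_cancel[THEN iffD1, rotated])
qed

lemma valency_eq_card_in: "a \<in> S \<Longrightarrow> valency a = card {x. (x,p) \<in> a}"
  using valency_eq_card[OF converse_in_scheme, of a p] valency_converse[of a] by simp

lemma valency_pos: "a \<in> S \<Longrightarrow> valency a > 0"
proof -
  assume a: "a \<in> S"
  then obtain p q where "(p,q) \<in> a" using nonempty_rel by fast
  then have "{x. (p,x) \<in> a} \<noteq> {}" by blast
  then show ?thesis using valency_eq_card[OF a, of p] by (simp add: card_gt_0_iff)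
qed

lemma inum_eq_1_unique:
  assumes "inum i j k = 1" "i \<in> S" "j \<in> S" "k \<in> S" "(m,n) \<in> k"
    and "(m,x) \<in> i" "(x,n) \<in> j" "(m,y) \<in> i" "(y,n) \<in> j"
  shows "x = y"
proof -
  have "card {l. (m,l) \<in> i \<and> (l,n) \<in> j} \<le> Suc 0"
    using assms(1) inum_eq_card[OF assms(2-5)] by simp
  then show ?thesis
    using assms(6-9) by (subst (asm) card_le_Suc0_iff_eq) auto
qed

lemma valency_mult_inum:
  assumes "i \<in> S" "j \<in> S" "l \<in> S"
  shows "valency i * inum l (converse j) i = valency l * inum i j l"
proof -
  fix p :: 'x
  define I L where "I = {a. (p,a) \<in> i}" and "L = {x. (p,x) \<in> l}"
  have "(\<Sum>a\<in>I. card {x\<in>L. (a,x) \<in> j}) = (\<Sum>a\<in>I. inum l (converse j) i)"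
    using inum_eq_card[OF assms(3) converse_in_scheme[OF assms(2)] assms(1)]
    by (intro sum.cong) (auto simp: I_def L_def)
  moreover have "(\<Sum>x\<in>L. card {a\<in>I. (a,x) \<in> j}) = (\<Sum>x\<in>L. inum i j l)"
    using inum_eq_card[OF assms] by (intro sum.cong) (auto simp: I_def L_def)
  ultimately show ?thesis
    using sum_card_filter_swap[of I L "\<lambda>a x. (a,x) \<in> j"]
      valency_eq_card[OF assms(1), of p] valency_eq_card[OF assms(3), of p]
    by (simp add: I_def L_def)
qed

definition rel_of :: "'x \<Rightarrow> 'x \<Rightarrow> ('x \<times> 'x) set" where
  "rel_of p q = (THE r. r \<in> S \<and> (p,q) \<in> r)"

lemma ex1_rel: "\<exists>!r. r \<in> S \<and> (p,q) \<in> r"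
proof -
  have "\<Union>S = UNIV" "\<forall>R\<in>S. \<forall>Q\<in>S. R \<noteq> Q \<longrightarrow> R \<inter> Q = {}"
    using is_scheme[unfolded is_scheme_def, THEN conjunct2] by simp_all
  then show ?thesis by blast
qed

lemma rel_of_in_scheme: "rel_of p q \<in> S"
  and mem_rel_of: "(p,q) \<in> rel_of p q"
  using theI'[OF ex1_rel[of p q]] unfolding rel_of_def by simp_all

lemma rel_of_eq_iff: "r \<in> S \<Longrightarrow> rel_of p q = r \<longleftrightarrow> (p,q) \<in> r"
  using ex1_rel[of p q] rel_of_in_scheme mem_rel_of by blast

lemma rel_of_in_cprod:
  assumes "i \<in> S" "j \<in> S" "(x,z) \<in> i" "(z,y) \<in> j"
  shows "rel_of x y \<in> cprod S i j"
proof -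
  have "card {z. (x,z) \<in> i \<and> (z,y) \<in> j} > 0"
    using assms(3,4) by (auto simp: card_gt_0_iff)
  then show ?thesis
    unfolding cprod_def using inum_eq_card[OF assms(1,2) rel_of_in_scheme mem_rel_of]
    by (simp add: rel_of_in_scheme)
qed

lemma cprod_converse_eq_singleton:
  assumes "i \<in> S" "k \<in> S" "n \<in> S" and full: "inum i k n = valency i"
  shows "cprod S (converse i) n = {k}"
proof -
  have into_k: "(x,c) \<in> k" if "(z,c) \<in> n" "(z,x) \<in> i" for z x c
  proof -
    have "{x. (z,x) \<in> i \<and> (x,c) \<in> k} = {x. (z,x) \<in> i}"
      using full inum_eq_card[OF assms(1-3) that(1)] valency_eq_card[OF assms(1), of z]
      by (intro card_subset_eq) auto
    then show ?thesis using that(2) by blast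
  qed
  have "c = k" if "c \<in> cprod S (converse i) n" for c
  proof -
    from that have c: "c \<in> S" "inum (converse i) n c > 0"
      unfolding cprod_def by simp_all
    obtain x y where xy: "(x,y) \<in> c" using nonempty_rel[OF c(1)] by fast
    have "card {z. (x,z) \<in> converse i \<and> (z,y) \<in> n} > 0"
      using c(2) inum_eq_card[OF converse_in_scheme[OF assms(1)] assms(3) c(1) xy] by simp
    then obtain z where "(z,x) \<in> i" "(z,y) \<in> n" by (auto simp: card_gt_0_iff)
    then have "(x,y) \<in> k" using into_k by blast
    then show "c = k" using xy c(1) assms(2) rel_of_eq_iff by metis
  qed
  moreover have "k \<in> cprod S (converse i) n"
  proof -
    obtain z y where zy: "(z,y) \<in> n" using nonempty_rel[OF assms(3)] by fast
    have "{x. (z,x) \<in> i} \<noteq> {}"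
      using valency_pos[OF assms(1)] valency_eq_card[OF assms(1), of z] by (auto simp: card_gt_0_iff)
    then obtain x where "(z,x) \<in> i" by blast
    then have "rel_of x y \<in> cprod S (converse i) n" "rel_of x y = k"
      using rel_of_in_cprod[OF converse_in_scheme[OF assms(1)] assms(3) _ zy]
        into_k[OF zy] rel_of_eq_iff[OF assms(2)] by auto
    then show ?thesis by simp
  qed
  ultimately show ?thesis by blast
qed

definition triangle_type :: "'x \<Rightarrow> 'x \<Rightarrow> 'x \<Rightarrow> ('x \<times> 'x) set \<times> ('x \<times> 'x) set \<times> ('x \<times> 'x) set" where
  "triangle_type p a b = (rel_of p a, rel_of a b, rel_of p b)"

lemma triangle_type_in_scheme: "triangle_type p a b \<in> S \<times> S \<times> S"
  unfolding triangle_type_def by (simp add: rel_of_in_scheme)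

lemma triangle_type_eq_iff:
  "i \<in> S \<Longrightarrow> k \<in> S \<Longrightarrow> n \<in> S \<Longrightarrow>
    triangle_type p a b = (i,k,n) \<longleftrightarrow> (p,a) \<in> i \<and> (a,b) \<in> k \<and> (p,b) \<in> n"
  unfolding triangle_type_def by (simp add: rel_of_eq_iff)

lemma mspan_dual_idem_adj_dual_idem:
  "mspan {mmult (mmult (dual_idem p i) (adj j)) (dual_idem p l) :: ('x, 'f::field) mat
          | i j l. i \<in> S \<and> j \<in> S \<and> l \<in> S} = fiber_constant (triangle_type p)"
proof -
  have gen: "mmult (mmult (dual_idem p i) (adj j)) (dual_idem p l) =
      (fiber_indicator (triangle_type p) (i,j,l) :: ('x, 'f) mat)"
    if "i \<in> S" "j \<in> S" "l \<in> S" for i j l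
    unfolding dual_idem_adj_dual_idem fiber_indicator_def triangle_type_def
    by (simp add: fun_eq_iff rel_of_eq_iff that)
  have "{mmult (mmult (dual_idem p i) (adj j)) (dual_idem p l) :: ('x, 'f) mat
          | i j l. i \<in> S \<and> j \<in> S \<and> l \<in> S} = {fiber_indicator (triangle_type p) t | t. t \<in> S \<times> S \<times> S}"
  proof (intro set_eqI iffI)
    fix g :: "('x, 'f) mat"
    assume "g \<in> {mmult (mmult (dual_idem p i) (adj j)) (dual_idem p l) | i j l. i \<in> S \<and> j \<in> S \<and> l \<in> S}"
    then obtain i j l where ijl: "i \<in> S" "j \<in> S" "l \<in> S"
      and "g = mmult (mmult (dual_idem p i) (adj j)) (dual_idem p l)" by blast
    then have "g = fiber_indicator (triangle_type p) (i,j,l)" using gen[OF ijl] by simp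
    then show "g \<in> {fiber_indicator (triangle_type p) t | t. t \<in> S \<times> S \<times> S}"
      using ijl by (intro CollectI exI[of _ "(i,j,l)"]) simp
  next
    fix g :: "('x, 'f) mat"
    assume "g \<in> {fiber_indicator (triangle_type p) t | t. t \<in> S \<times> S \<times> S}"
    then obtain i j l where ijl: "i \<in> S" "j \<in> S" "l \<in> S"
      and "g = fiber_indicator (triangle_type p) (i,j,l)" by blast
    then have "g = mmult (mmult (dual_idem p i) (adj j)) (dual_idem p l)" using gen[OF ijl] by simp
    then show "g \<in> {mmult (mmult (dual_idem p i) (adj j)) (dual_idem p l) | i j l. i \<in> S \<and> j \<in> S \<and> l \<in> S}"
      using ijl by (intro CollectI exI[of _ i] exI[of _ j] exI[of _ l]) simp
  qed
  then show ?thesis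
    using mspan_fiber_indicators[of "S \<times> S \<times> S" "triangle_type p"] triangle_type_in_scheme
    by (simp add: finite_scheme)
qed

lemma unital_subalgebra_fiber_constant_iff:
  "unital_subalgebra (fiber_constant (triangle_type p) :: ('x, 'f::field) mat set) \<longleftrightarrow>
    (\<forall>M\<in>fiber_constant (triangle_type p). \<forall>N\<in>fiber_constant (triangle_type p).
      mmult M N \<in> (fiber_constant (triangle_type p) :: ('x, 'f) mat set))"
proof -
  have "mone \<in> (fiber_constant (triangle_type p) :: ('x, 'f) mat set)"
    unfolding fiber_constant_def
  proof (intro CollectI allI impI)
    fix a b a' b' assume "triangle_type p a b = triangle_type p a' b'"
    then have "(a,b) \<in> Id \<longleftrightarrow> (a',b') \<in> Id"
      using rel_of_eq_iff[OF Id_in_scheme] unfolding triangle_type_def by (metis prod.inject)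
    then show "mone a b = (mone a' b' :: 'f)" unfolding mone_def by simp
  qed
  then show ?thesis
    unfolding unital_subalgebra_def using fiber_constant_linear zero_in_fiber_constant by blast
qed

lemma mmult_triangle_type_expansion:
  fixes \<phi> \<psi> :: "_ \<Rightarrow> 'f::field"
  shows "mmult (\<lambda>a x. \<phi> (triangle_type p a x)) (\<lambda>x b. \<psi> (triangle_type p x b)) a b =
    (\<Sum>(l,j,m)\<in>S \<times> S \<times> S. of_nat (triple_count p l j m a b) * (\<phi> (rel_of p a, j, l) * \<psi> (l, m, rel_of p b)))"
proof -
  define g where "g x = (rel_of p x, rel_of a x, rel_of x b)" for x
  define h where "h x = \<phi> (triangle_type p a x) * \<psi> (triangle_type p x b)" for x
  have "mmult (\<lambda>a x. \<phi> (triangle_type p a x)) (\<lambda>x b. \<psi> (triangle_type p x b)) a b = sum h UNIV"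
    unfolding mmult_def h_def ..
  also have "\<dots> = (\<Sum>t\<in>S \<times> S \<times> S. sum h {x \<in> UNIV. g x = t})"
    by (rule sum.group[symmetric]) (auto simp: g_def finite_scheme rel_of_in_scheme)
  also have "\<dots> = (\<Sum>(l,j,m)\<in>S \<times> S \<times> S.
      of_nat (triple_count p l j m a b) * (\<phi> (rel_of p a, j, l) * \<psi> (l, m, rel_of p b)))"
  proof (rule sum.cong[OF refl], clarify)
    fix l j m assume in_scheme: "l \<in> S" "j \<in> S" "m \<in> S"
    have fiber: "{x \<in> UNIV. g x = (l,j,m)} = {x. (p,x) \<in> l \<and> (a,x) \<in> j \<and> (x,b) \<in> m}"
      unfolding g_def using rel_of_eq_iff in_scheme by auto
    have "h x = \<phi> (rel_of p a, j, l) * \<psi> (l, m, rel_of p b)" if "x \<in> {x \<in> UNIV. g x = (l,j,m)}" for x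
      using that unfolding h_def g_def triangle_type_def by simp
    then show "sum h {x \<in> UNIV. g x = (l,j,m)} =
        of_nat (triple_count p l j m a b) * (\<phi> (rel_of p a, j, l) * \<psi> (l, m, rel_of p b))"
      unfolding triple_count_def fiber[symmetric] by simp
  qed
  finally show ?thesis .
qed

lemma mmult_fiber_indicators:
  assumes "l \<in> S" "j \<in> S" "m \<in> S"
  shows "mmult (fiber_indicator (triangle_type p) (rel_of p a, j, l))
      (fiber_indicator (triangle_type p) (l, m, rel_of p b)) a b = (of_nat (triple_count p l j m a b) :: 'f::field)"
proof -
  have "mmult (fiber_indicator (triangle_type p) (rel_of p a, j, l))
      (fiber_indicator (triangle_type p) (l, m, rel_of p b)) a b =
    (\<Sum>x\<in>UNIV. of_bool ((p,x) \<in> l \<and> (a,x) \<in> j \<and> (x,b) \<in> m) :: 'f)"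
    unfolding mmult_def fiber_indicator_def triangle_type_def
    by (rule sum.cong[OF refl]) (auto simp: rel_of_eq_iff assms)
  then show ?thesis by (simp add: triple_count_def)
qed

lemma mmult_closed_iff_triple_counts:
  "(\<forall>M\<in>fiber_constant (triangle_type p). \<forall>N\<in>fiber_constant (triangle_type p).
      mmult M N \<in> (fiber_constant (triangle_type p) :: ('x, 'f::field) mat set)) \<longleftrightarrow>
    (\<forall>a b a' b'. triangle_type p a b = triangle_type p a' b' \<longrightarrow> (\<forall>l\<in>S. \<forall>j\<in>S. \<forall>m\<in>S.
      (of_nat (triple_count p l j m a b) :: 'f) = of_nat (triple_count p l j m a' b')))"
  (is "?closed \<longleftrightarrow> ?counts")
proof
  assume closed: ?closed
  show ?counts
  proof (intro allI impI ballI)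
    fix a b a' b' l j m
    assume same: "triangle_type p a b = triangle_type p a' b'" and lj: "l \<in> S" "j \<in> S" "m \<in> S"
    then have rels: "rel_of p a' = rel_of p a" "rel_of p b' = rel_of p b"
      unfolding triangle_type_def by simp_all
    have "mmult (fiber_indicator (triangle_type p) (rel_of p a, j, l))
        (fiber_indicator (triangle_type p) (l, m, rel_of p b)) \<in> (fiber_constant (triangle_type p) :: ('x, 'f) mat set)"
      using closed by (simp add: fiber_indicator_in_fiber_constant)
    then have "mmult (fiber_indicator (triangle_type p) (rel_of p a, j, l))
        (fiber_indicator (triangle_type p) (l, m, rel_of p b)) a b =
      (mmult (fiber_indicator (triangle_type p) (rel_of p a, j, l))
        (fiber_indicator (triangle_type p) (l, m, rel_of p b)) a' b' :: 'f)"
      using same by (rule fiber_constantD)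
    then show "(of_nat (triple_count p l j m a b) :: 'f) = of_nat (triple_count p l j m a' b')"
      using mmult_fiber_indicators[OF lj, of p a b, where 'f='f]
        mmult_fiber_indicators[OF lj, of p a' b', where 'f='f] rels by simp
  qed
next
  assume counts: ?counts
  show ?closed
  proof (intro ballI)
    fix M N :: "('x, 'f) mat"
    assume "M \<in> fiber_constant (triangle_type p)" "N \<in> fiber_constant (triangle_type p)"
    then obtain \<phi> \<psi> where M: "M = (\<lambda>a x. \<phi> (triangle_type p a x))" and N: "N = (\<lambda>x b. \<psi> (triangle_type p x b))"
      unfolding fiber_constant_iff_factors by blast
    have "mmult M N a b = mmult M N a' b'" if same: "triangle_type p a b = triangle_type p a' b'" for a b a' b'
    proof -
      have rels: "rel_of p a' = rel_of p a" "rel_of p b' = rel_of p b"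
        using same unfolding triangle_type_def by simp_all
      have "(of_nat (triple_count p l j m a b) :: 'f) = of_nat (triple_count p l j m a' b')"
        if "l \<in> S" "j \<in> S" "m \<in> S" for l j m
        using counts same that by blast
      then show ?thesis
        unfolding M N mmult_triangle_type_expansion rels by (intro sum.cong refl) auto
    qed
    then show "mmult M N \<in> fiber_constant (triangle_type p)"
      unfolding fiber_constant_def by blast
  qed
qed

lemma triply_regular_iff_triple_counts:
  "triply_regular TYPE('f::field) S \<longleftrightarrow>
    (\<forall>p a b a' b'. triangle_type p a b = triangle_type p a' b' \<longrightarrow> (\<forall>l\<in>S. \<forall>j\<in>S. \<forall>m\<in>S.
      (of_nat (triple_count p l j m a b) :: 'f) = of_nat (triple_count p l j m a' b')))"
  unfolding triply_regular_def mspan_dual_idem_adj_dual_idem unital_subalgebra_fiber_constant_iff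
    mmult_closed_iff_triple_counts by blast

lemma triangle_type_eq_if_cprod_singleton:
  assumes "u \<in> S" "z \<in> S" "card (cprod S (converse u) z) = 1"
    and "(p,a) \<in> u" "(p,a') \<in> u" "(p,b) \<in> z"
  shows "triangle_type p a b = triangle_type p a' b"
proof -
  obtain c where c: "cprod S (converse u) z = {c}"
    using assms(3) by (auto simp: card_1_singleton_iff)
  have "rel_of p a'' = u \<and> rel_of a'' b = c" if "(p,a'') \<in> u" for a''
    using rel_of_in_cprod[OF converse_in_scheme[OF assms(1)] assms(2), of a'' p b] that assms(6) c
      rel_of_eq_iff[OF assms(1)] by simp
  from this[OF assms(4)] this[OF assms(5)] show ?thesis
    unfolding triangle_type_def by simp
qed

lemma forbidden_configuration_separates:
  assumes in_scheme: "u \<in> S" "v \<in> S" "w \<in> S" "y \<in> S" "z \<in> S"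
    and forbidden: "forbidden_configuration S u v w y z"
  obtains a a' b where "triangle_type p a b = triangle_type p a' b"
    "triple_count p w v y a b = 1" "triple_count p w v y a' b = 0"
proof -
  from forbidden have uz: "valency u = 2" "valency z = 2" and uvw: "inum u v w = 1"
    and wyz: "inum w y z = 1" and cp: "card (cprod S (converse u) z) = 1"
    unfolding forbidden_configuration_def by simp_all
  have "{b. (p,b) \<in> z} \<noteq> {}"
    using uz(2) valency_eq_card[OF in_scheme(5), of p] by (intro notI) simp
  then obtain b where b: "(p,b) \<in> z" by blast
  have "card {x. (p,x) \<in> w \<and> (x,b) \<in> y} = 1"
    using inum_eq_card[OF in_scheme(3-5) b] wyz by simp
  then obtain x where "{x. (p,x) \<in> w \<and> (x,b) \<in> y} = {x}"
    by (auto simp: card_1_singleton_iff)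
  then have x: "(p,x') \<in> w \<and> (x',b) \<in> y \<longleftrightarrow> x' = x" for x'
    unfolding set_eq_iff by simp
  then have "(p,x) \<in> w" by blast
  then have "card {a. (p,a) \<in> u \<and> (a,x) \<in> v} = 1"
    using inum_eq_card[OF in_scheme(1-3)] uvw by simp
  then obtain a where "{a. (p,a) \<in> u \<and> (a,x) \<in> v} = {a}"
    by (auto simp: card_1_singleton_iff)
  then have a: "(p,a') \<in> u \<and> (a',x) \<in> v \<longleftrightarrow> a' = a" for a'
    unfolding set_eq_iff by simp
  have "\<not> {a'. (p,a') \<in> u} \<subseteq> {a}"
    using uz(1) valency_eq_card[OF in_scheme(1), of p] card_mono[of "{a}" "{a'. (p,a') \<in> u}"]
    by auto
  then obtain a' where a': "(p,a') \<in> u" "a' \<noteq> a" by blast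
  have "(p,a) \<in> u" using a[of a] by simp
  then have "triangle_type p a b = triangle_type p a' b"
    using triangle_type_eq_if_cprod_singleton[OF in_scheme(1,5) cp _ a'(1) b] by simp
  moreover have "{x'. (p,x') \<in> w \<and> (a,x') \<in> v \<and> (x',b) \<in> y} = {x}"
    using a x by auto
  then have "triple_count p w v y a b = 1"
    unfolding triple_count_def by simp
  moreover have "{x'. (p,x') \<in> w \<and> (a',x') \<in> v \<and> (x',b) \<in> y} = {}"
  proof -
    have "(a',x) \<notin> v" using a[of a'] a' by blast
    moreover have "x' = x" if "(p,x') \<in> w" "(x',b) \<in> y" for x' using x[of x'] that by blast
    ultimately show ?thesis by blast
  qed
  then have "triple_count p w v y a' b = 0"
    unfolding triple_count_def by simp
  ultimately show thesis using that by blast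
qed

lemma no_forbidden_configuration_if_triply_regular:
  assumes "triply_regular TYPE('f::field) S"
  shows "\<not> (\<exists>u\<in>S. \<exists>v\<in>S. \<exists>w\<in>S. \<exists>y\<in>S. \<exists>z\<in>S. forbidden_configuration S u v w y z)"
proof
  assume "\<exists>u\<in>S. \<exists>v\<in>S. \<exists>w\<in>S. \<exists>y\<in>S. \<exists>z\<in>S. forbidden_configuration S u v w y z"
  then obtain u v w y z where in_scheme: "u \<in> S" "v \<in> S" "w \<in> S" "y \<in> S" "z \<in> S"
    and "forbidden_configuration S u v w y z" by blast
  then obtain p a a' b :: 'x where "triangle_type p a b = triangle_type p a' b"
    "triple_count p w v y a b = 1" "triple_count p w v y a' b = 0"
    using forbidden_configuration_separates by metis
  with assms in_scheme have "(1 :: 'f) = 0"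
    unfolding triply_regular_iff_triple_counts by (metis of_nat_0 of_nat_1)
  then show False by simp
qed

end

locale quasi_thin_scheme = scheme S for S :: "('x::finite \<times> 'x) set set" +
  assumes quasi_thin: "quasi_thin S"
begin

lemma valency_le_2: "a \<in> S \<Longrightarrow> valency a \<le> 2"
  using quasi_thin unfolding quasi_thin_def by blast

lemma card_out_le_2: "a \<in> S \<Longrightarrow> card {x. (p,x) \<in> a} \<le> 2"
  using valency_le_2 valency_eq_card by metis

(* Two triangles (p,a,b), (p,a',b') of the same type (i,k,n): the first is closed by a point x of
   types l, j, m, the second by no point, although any two of the three conditions on such a
   point are met at (a',b'), by y_lj, y_lm and y_jm. *)
context
  fixes p a b a' b' x y_lj y_lm y_jm :: 'x and i k n l j m :: "('x \<times> 'x) set"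
  assumes in_scheme: "i \<in> S" "k \<in> S" "n \<in> S" "l \<in> S" "j \<in> S" "m \<in> S"
    and triangles: "(p,a) \<in> i" "(a,b) \<in> k" "(p,b) \<in> n" "(p,a') \<in> i" "(a',b') \<in> k" "(p,b') \<in> n"
    and path: "(p,x) \<in> l" "(a,x) \<in> j" "(x,b) \<in> m"
    and y_lj: "(p,y_lj) \<in> l" "(a',y_lj) \<in> j"
    and y_lm: "(p,y_lm) \<in> l" "(y_lm,b') \<in> m"
    and y_jm: "(a',y_jm) \<in> j" "(y_jm,b') \<in> m"
    and T: "inum l (converse j) i = 1" and U: "inum l m n = 1"
    and no_path: "triple_count p l j m a' b' = 0"
begin

lemma no_path_distinct: "y_lj \<noteq> y_lm" "(p,y_jm) \<notin> l"
  using no_path y_lj y_lm y_jm by (auto simp: triple_count_def)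

lemma no_path_valencies: "valency l = 2" "valency j = 2" "valency m = 2"
proof -
  have "2 \<le> card {z. (p,z) \<in> l}"
    using y_lj y_lm no_path_distinct by (intro two_le_card[of _ y_lj y_lm]) auto
  then show "valency l = 2"
    using valency_eq_card[OF in_scheme(4)] card_out_le_2[OF in_scheme(4)] by (metis le_antisym)
  have "2 \<le> card {z. (a',z) \<in> j}"
    using y_lj y_jm no_path_distinct by (intro two_le_card[of _ y_lj y_jm]) auto
  then show "valency j = 2"
    using valency_eq_card[OF in_scheme(5)] card_out_le_2[OF in_scheme(5)] by (metis le_antisym)
  have "2 \<le> card {z. (z,b') \<in> m}"
    using y_lm y_jm no_path_distinct by (intro two_le_card[of _ y_lm y_jm]) auto
  then show "valency m = 2"
    using valency_eq_card_in[OF in_scheme(6)] valency_le_2[OF in_scheme(6)] by (metis le_antisym)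
qed

lemma no_path_inums: "valency i = 2" "inum i j l = 1" "valency n = 2" "inum n (converse m) l = 1"
proof -
  have "valency i = 2 * inum i j l"
    using valency_mult_inum[of i j l] in_scheme T no_path_valencies(1) by simp
  moreover note valency_pos[OF in_scheme(1)] valency_le_2[OF in_scheme(1)]
  ultimately show "valency i = 2" and "inum i j l = 1" by auto
  have "valency n = 2 * inum n (converse m) l"
    using valency_mult_inum[of n "converse m" l] in_scheme U no_path_valencies(1)
    by (simp add: converse_in_scheme)
  moreover note valency_pos[OF in_scheme(3)] valency_le_2[OF in_scheme(3)]
  ultimately show "valency n = 2" and "inum n (converse m) l = 1" by auto
qed

(* If p_{ik}^n were 1, then j, m and k would match the 2-element neighbourhoods pR_i, pR_l, pR_n
   bijectively, and chasing the path a - x - b would force y_lj = y_lm. *)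
lemma no_path_inum_ikn_eq_2: "inum i k n = 2"
proof (rule ccontr)
  assume ne2: "inum i k n \<noteq> 2"
  have ikn: "inum i k n = card {z. (p,z) \<in> i \<and> (z,b) \<in> k}"
    using inum_eq_card[OF in_scheme(1-3) triangles(3)] .
  have "card {z. (p,z) \<in> i \<and> (z,b) \<in> k} \<le> card {z. (p,z) \<in> i}"
    by (intro card_mono) auto
  moreover have "card {z. (p,z) \<in> i \<and> (z,b) \<in> k} \<noteq> 0"
    using triangles(1,2) by (auto simp: card_eq_0_iff)
  ultimately have ikn1: "inum i k n = 1"
    using ne2 ikn no_path_inums(1) valency_eq_card[OF in_scheme(1), of p] by linarith
  then have nki1: "inum n (converse k) i = 1"
    using valency_mult_inum[of n "converse k" i] in_scheme no_path_inums(1,3)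
    by (simp add: converse_in_scheme)
  note unique = inum_eq_1_unique[OF _ _ _ _ path(1)] inum_eq_1_unique[OF _ _ _ _ triangles(1)]
    inum_eq_1_unique[OF _ _ _ _ triangles(3)]
  show False
  proof (cases "y_lj = x")
    case True
    then have "a' = a"
      using unique(1)[OF no_path_inums(2)] in_scheme triangles y_lj path by blast
    then have "b' = b"
      using unique(2)[OF nki1] in_scheme triangles by (simp add: converse_in_scheme)
    then have "y_lm = x"
      using unique(3)[OF U] in_scheme y_lm path by blast
    then show False using True no_path_distinct(1) by simp
  next
    case F1: False
    show False
    proof (cases "y_lm = x")
      case True
      then have "b' = b"
        using unique(1)[OF no_path_inums(4)] in_scheme triangles y_lm path
        by (simp add: converse_in_scheme)
      then have "a' = a"
        using unique(3)[OF ikn1] in_scheme triangles by blast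
      then have "y_lj = x"
        using unique(2)[OF T] in_scheme y_lj path by (simp add: converse_in_scheme)
      then show False using F1 by simp
    next
      case F2: False
      have "card {x, y_lj, y_lm} \<le> card {z. (p,z) \<in> l}"
        using path y_lj y_lm by (intro card_mono) auto
      then show False
        using F1 F2 no_path_distinct(1) no_path_valencies(1) valency_eq_card[OF in_scheme(4), of p]
        by simp
    qed
  qed
qed

lemma forbidden_configuration_of_no_path: "forbidden_configuration S i j l m n"
  unfolding forbidden_configuration_def
  using no_path_valencies no_path_inums U no_path_inum_ikn_eq_2
    cprod_converse_eq_singleton[OF in_scheme(1-3)] by simp

end

lemma triple_count_pos_propagates:
  assumes no_forbidden: "\<not> (\<exists>u\<in>S. \<exists>v\<in>S. \<exists>w\<in>S. \<exists>y\<in>S. \<exists>z\<in>S. forbidden_configuration S u v w y z)"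
    and in_scheme: "i \<in> S" "k \<in> S" "n \<in> S" "l \<in> S" "j \<in> S" "m \<in> S"
    and triangles: "(p,a) \<in> i" "(a,b) \<in> k" "(p,b) \<in> n" "(p,a') \<in> i" "(a',b') \<in> k" "(p,b') \<in> n"
    and T: "inum l (converse j) i = 1" and U: "inum l m n = 1" and V: "inum j m k = 1"
    and "triple_count p l j m a b \<noteq> 0"
  shows "triple_count p l j m a' b' \<noteq> 0"
proof
  assume no_path: "triple_count p l j m a' b' = 0"
  obtain x where "(p,x) \<in> l" "(a,x) \<in> j" "(x,b) \<in> m"
    using assms(17) by (auto simp: triple_count_def card_eq_0_iff)
  moreover obtain y_lj where "(p,y_lj) \<in> l" "(a',y_lj) \<in> j"
  proof -
    have "card {z. (p,z) \<in> l \<and> (z,a') \<in> converse j} > 0"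
      using T inum_eq_card[OF in_scheme(4) converse_in_scheme[OF in_scheme(5)] in_scheme(1) triangles(4)]
      by simp
    then show thesis using that by (auto simp: card_gt_0_iff)
  qed
  moreover obtain y_lm where "(p,y_lm) \<in> l" "(y_lm,b') \<in> m"
  proof -
    have "card {z. (p,z) \<in> l \<and> (z,b') \<in> m} > 0"
      using U inum_eq_card[OF in_scheme(4,6,3) triangles(6)] by simp
    then show thesis using that by (auto simp: card_gt_0_iff)
  qed
  moreover obtain y_jm where "(a',y_jm) \<in> j" "(y_jm,b') \<in> m"
  proof -
    have "card {z. (a',z) \<in> j \<and> (z,b') \<in> m} > 0"
      using V inum_eq_card[OF in_scheme(5,6,2) triangles(5)] by simp
    then show thesis using that by (auto simp: card_gt_0_iff)
  qed
  ultimately have "forbidden_configuration S i j l m n"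
    using forbidden_configuration_of_no_path in_scheme triangles T U no_path by blast
  then show False using no_forbidden in_scheme by blast
qed

lemma triple_count_eq_unless_face_inums_1:
  assumes in_scheme: "i \<in> S" "k \<in> S" "n \<in> S" "l \<in> S" "j \<in> S" "m \<in> S"
    and triangles: "(p,a) \<in> i" "(a,b) \<in> k" "(p,b) \<in> n" "(p,a') \<in> i" "(a',b') \<in> k" "(p,b') \<in> n"
    and not_all_1: "\<not> (inum l (converse j) i = 1 \<and> inum l m n = 1 \<and> inum j m k = 1)"
  shows "triple_count p l j m a b = triple_count p l j m a' b'"
proof -
  define T where "T c = {x. (p,x) \<in> l \<and> (c,x) \<in> j}" for c
  define U where "U d = {x. (p,x) \<in> l \<and> (x,d) \<in> m}" for d
  define V where "V c d = {x. (c,x) \<in> j \<and> (x,d) \<in> m}" for c d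
  have card_T: "card (T c) = inum l (converse j) i" if "(p,c) \<in> i" for c
    using inum_eq_card[OF in_scheme(4) converse_in_scheme[OF in_scheme(5)] in_scheme(1) that]
    by (simp add: T_def)
  have card_U: "card (U d) = inum l m n" if "(p,d) \<in> n" for d
    using inum_eq_card[OF in_scheme(4,6,3) that] by (simp add: U_def)
  have card_V: "card (V c d) = inum j m k" if "(c,d) \<in> k" for c d
    using inum_eq_card[OF in_scheme(5,6,2) that] by (simp add: V_def)
  have count_TU: "triple_count p l j m c d = card (T c \<inter> U d)" for c d
    unfolding triple_count_def T_def U_def by (rule arg_cong[where f=card]) auto
  have count_VT: "triple_count p l j m c d = card (V c d \<inter> T c)" for c d
    unfolding triple_count_def T_def V_def by (rule arg_cong[where f=card]) auto
  have subsets: "T c \<subseteq> {x. (p,x) \<in> l}" "U d \<subseteq> {x. (p,x) \<in> l}"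
    "T c \<subseteq> {x. (c,x) \<in> j}" "V c d \<subseteq> {x. (c,x) \<in> j}" for c d
    unfolding T_def U_def V_def by auto
  note small = card_out_le_2[OF in_scheme(4)] card_out_le_2[OF in_scheme(5)]
  consider "card (T a) \<noteq> 1" | "card (U b) \<noteq> 1" | "card (V a b) \<noteq> 1"
    using not_all_1 card_T card_U card_V triangles by metis
  then show ?thesis
  proof cases
    case 1
    then show ?thesis
      unfolding count_TU using card_T card_U triangles small subsets
      by (intro card_Int_eq_if_card_ne_1[of "{x. (p,x) \<in> l}" "{x. (p,x) \<in> l}"]) auto
  next
    case 2
    then show ?thesis
      unfolding count_TU Int_commute[of "T _"] using card_T card_U triangles small subsets
      by (intro card_Int_eq_if_card_ne_1[of "{x. (p,x) \<in> l}" "{x. (p,x) \<in> l}"]) auto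
  next
    case 3
    then show ?thesis
      unfolding count_VT using card_T card_V triangles small subsets
      by (intro card_Int_eq_if_card_ne_1[of "{x. (a,x) \<in> j}" "{x. (a',x) \<in> j}"]) auto
  qed
qed

lemma triple_count_type_determined:
  assumes no_forbidden: "\<not> (\<exists>u\<in>S. \<exists>v\<in>S. \<exists>w\<in>S. \<exists>y\<in>S. \<exists>z\<in>S. forbidden_configuration S u v w y z)"
    and same_type: "triangle_type p a b = triangle_type p a' b'"
    and in_scheme: "l \<in> S" "j \<in> S" "m \<in> S"
  shows "triple_count p l j m a b = triple_count p l j m a' b'"
proof -
  obtain i k n where ikn: "i \<in> S" "k \<in> S" "n \<in> S" and type: "triangle_type p a b = (i,k,n)"
    using triangle_type_in_scheme by (metis mem_Sigma_iff prod_cases3)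
  moreover have "triangle_type p a' b' = (i,k,n)"
    using type same_type by simp
  ultimately have "(p,a) \<in> i \<and> (a,b) \<in> k \<and> (p,b) \<in> n" "(p,a') \<in> i \<and> (a',b') \<in> k \<and> (p,b') \<in> n"
    using triangle_type_eq_iff by blast+
  then have triangles: "(p,a) \<in> i" "(a,b) \<in> k" "(p,b) \<in> n" "(p,a') \<in> i" "(a',b') \<in> k" "(p,b') \<in> n"
    by simp_all
  show ?thesis
  proof (cases "inum l (converse j) i = 1 \<and> inum l m n = 1 \<and> inum j m k = 1")
    case True
    have "triple_count p l j m c d \<le> 1" if "(p,c) \<in> i" for c d
    proof -
      have "triple_count p l j m c d \<le> card {x. (p,x) \<in> l \<and> (x,c) \<in> converse j}"
        unfolding triple_count_def by (intro card_mono) auto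
      then show ?thesis
        using True inum_eq_card[OF in_scheme(1) converse_in_scheme[OF in_scheme(2)] ikn(1) that] by simp
    qed
    moreover have "triple_count p l j m a b \<noteq> 0 \<longleftrightarrow> triple_count p l j m a' b' \<noteq> 0"
      using triple_count_pos_propagates[OF no_forbidden ikn in_scheme] triangles True by blast
    ultimately show ?thesis
      using triangles(1,4) by (metis le_eq_less_or_eq less_one)
  next
    case False
    then show ?thesis
      using triple_count_eq_unless_face_inums_1[OF ikn in_scheme triangles] by blast
  qed
qed

lemma triply_regular_if_no_forbidden_configuration:
  assumes "\<not> (\<exists>u\<in>S. \<exists>v\<in>S. \<exists>w\<in>S. \<exists>y\<in>S. \<exists>z\<in>S. forbidden_configuration S u v w y z)"
  shows "triply_regular TYPE('f::field) S"
proof (unfold triply_regular_iff_triple_counts, intro allI impI ballI)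
  fix p a b a' b' l j m
  assume "triangle_type p a b = triangle_type p a' b'" "l \<in> S" "j \<in> S" "m \<in> S"
  from triple_count_type_determined[OF assms this]
  show "(of_nat (triple_count p l j m a b) :: 'f) = of_nat (triple_count p l j m a' b')"
    by simp
qed

end

theorem corollary4p12:
  fixes S :: "('x::finite \<times> 'x) set set"
  assumes "is_scheme S" and "quasi_thin S"
  shows "triply_regular TYPE('f::field) S \<longleftrightarrow>
    \<not> (\<exists>u\<in>S. \<exists>v\<in>S. \<exists>w\<in>S. \<exists>y\<in>S. \<exists>z\<in>S.
          valency u = 2 \<and> valency v = 2 \<and> valency w = 2 \<and> valency y = 2 \<and> valency z = 2 \<and>
          inum u v w = 1 \<and> inum w y z = 1 \<and> card (cprod S (converse u) z) = 1)"
proof -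
  interpret quasi_thin_scheme S
    using assms by (simp add: quasi_thin_scheme_def quasi_thin_scheme_axioms_def scheme_def)
  show ?thesis
    using no_forbidden_configuration_if_triply_regular[where 'f='f]
      triply_regular_if_no_forbidden_configuration[where 'f='f]
    unfolding forbidden_configuration_def by blast
qed

end
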